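(* Let $\mathcal G$ be a tree on $n\ge2$ nodes (so it has $n-1$ edges), with oriented incidence matrix $D_\tau\in\mathbb R^{n\times(n-1)}$, edge-weight matrix $W=\mathrm{diag}(w_1,\dots,w_{n-1})$, $w_l>0$, and time-scale matrix $E=\mathrm{diag}(\epsilon_1,\dots,\epsilon_n)$, $\epsilon_i>0$; let $L_{e,s}^\tau=D_\tau^TE^{-1}D_\tau$ and $\sigma_w,\sigma_v$ real scalars. Consider $$\tilde\Sigma_\tau(s)=\big(sI+L_{e,s}^\tau W\big)^{-1}\begin{bmatrix}\sigma_wD_\tau^TE^{-1/2} & -\sigma_vL_{e,s}^\tau W^{1/2}\end{bmatrix},\qquad \Pi_\tau(s)=W^{1/2}\tilde\Sigma_\tau(s).$$ Then $$\|\tilde\Sigma_\tau\|_\infty^2=\bar\sigma\big(\sigma_w^2(WL_{e,s}^\tau W)^{-1}+\sigma_v^2W^{-1}\big),\qquad \|\Pi_\tau\|_\infty^2=\sigma_w^2\,\bar\sigma\big((W^{1/2}L_{e,s}^\tau W^{1/2})^{-1}\big)+\sigma_v^2.$$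
   Context: The incidence matrix of a graph with an arbitrary orientation of each edge has entry $1$ in row $i$, column $l$ if node $i$ is the initial node of edge $l$, $-1$ if it is the terminal node, and $0$ otherwise. Powers of positive diagonal matrices are taken entrywise. For a stable transfer matrix $\Phi(s)$, $\|\Phi\|_\infty=\sup_{\omega\in\mathbb R}\bar\sigma(\Phi(j\omega))$ where $\bar\sigma$ is the largest singular value. (This is the general edge-consensus model with $R=I$, which is the case when the graph is its own spanning tree.) *)

theory Defs
  imports "HOL-Analysis.Analysis"
begin

text \<open>Nodes are indexed by a finite type 'n, edges by a finite type 'e.
  An oriented graph is given by src l (initial node) and tgt l (terminal node) of edge l.\<close>

definition incidence :: "('e::finite \<Rightarrow> 'n::finite) \<Rightarrow> ('e \<Rightarrow> 'n) \<Rightarrow> real^'e^'n" where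
  "incidence src tgt = (\<chi> i l. if i = src l then 1 else if i = tgt l then -1 else 0)"

definition is_tree :: "('e::finite \<Rightarrow> 'n::finite) \<Rightarrow> ('e \<Rightarrow> 'n) \<Rightarrow> bool" where
  "is_tree src tgt \<longleftrightarrow> (\<forall>l. src l \<noteq> tgt l) \<and> CARD('e) + 1 = CARD('n) \<and>
     (\<forall>i j. (i, j) \<in> ({(src l, tgt l) | l. True} \<union> {(tgt l, src l) | l. True})\<^sup>*)"

definition diag :: "('n::finite \<Rightarrow> real) \<Rightarrow> real^'n^'n" where
  "diag d = (\<chi> i j. if i = j then d i else 0)"

definition cmat :: "real^'b^'a \<Rightarrow> complex^'b^'a" where
  "cmat A = (\<chi> i j. complex_of_real (A $ i $ j))"

definition hcat :: "'x^'b^'a \<Rightarrow> 'x^'c^'a \<Rightarrow> 'x^('b + 'c)^'a" where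
  "hcat A B = (\<chi> i k. case k of Inl j \<Rightarrow> A $ i $ j | Inr j \<Rightarrow> B $ i $ j)"

definition cadj :: "complex^'b^'a \<Rightarrow> complex^'a^'b" where
  "cadj A = (\<chi> i j. cnj (A $ j $ i))"

definition sigma_max :: "complex^'b::finite^'a::finite \<Rightarrow> real" where
  "sigma_max M = sqrt (Max {x::real. \<exists>v. v \<noteq> 0 \<and> (cadj M ** M) *v v = complex_of_real x *s v})"

definition hinf_norm :: "(complex \<Rightarrow> complex^'b::finite^'a::finite) \<Rightarrow> real" where
  "hinf_norm \<Phi> = (SUP \<omega>::real. sigma_max (\<Phi> (\<i> * complex_of_real \<omega>)))"

end

theory Submission
  imports Defs
begin

(* The transfer matrix is Sigma(s) = (sI + A)^-1 B with A = L W, and A^-1 B B^T = sw^2 W^-1 + sv^2 L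
   is symmetric.  For s = i omega put y = (sI + A)^-H u; then the DC response
   Sigma(0)^H u = B^T A^-T u equals B^T y + conj(s) B^T A^-T y, and the two summands are orthogonal
   for the real inner product because y^H B B^T A^-T y is real.  Hence
   |Sigma(i omega)^H u| <= |Sigma(0)^H u| at every frequency, so both H-infinity norms (with W^1/2
   in front or not) are attained at omega = 0.  The DC gains are then computed algebraically:
   Sigma(0) Sigma(0)^T = sw^2 (W L W)^-1 + sv^2 W^-1, and W^1/2 Sigma(0) = [sw G, -sv I] with
   G G^T = (W^1/2 L W^1/2)^-1.  The edge Laplacian L is invertible because the incidence matrix of
   a tree has full column rank. *)

lemma mat_vector_mult: "mat c *v x = c *s (x::'a::comm_semiring_1^'n)"
proof -
  have "(\<Sum>k\<in>UNIV. (if i = k then c else 0) * x $ k)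
      = (\<Sum>k\<in>UNIV. if k = i then c * x $ i else 0)" for i
    by (rule sum.cong) auto
  then show ?thesis
    by (simp add: mat_def matrix_vector_mult_def vec_eq_iff)
qed

lemma scaleR_matrix_vector_mult: "(r *\<^sub>R A) *v v = r *\<^sub>R (A *v (v::'a::real_algebra_1^'n))"
  by (simp add: matrix_vector_mult_def vec_eq_iff scaleR_sum_right)

lemma transpose_add: "transpose (A + B) = transpose A + transpose B"
  by (simp add: transpose_def vec_eq_iff)

lemma matrix_add_rdistrib: "(A + B) ** C = A ** C + B ** (C::'a::semiring_1^'c::finite^'b::finite)"
  by (simp add: matrix_matrix_mult_def vec_eq_iff distrib_right sum.distrib)

lemma scaleR_mult_transpose:
  "(a *\<^sub>R X) ** transpose (a *\<^sub>R Y) = a\<^sup>2 *\<^sub>R (X ** transpose (Y::real^'m::finite^'n::finite))"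
  by (simp add: transpose_scalar matrix_scalar_ac power2_eq_square flip: scalar_matrix_assoc)

lemma inner_matrix_vector_mult: "inner (A *v x) y = inner x (transpose A *v (y::real^'m::finite))"
  by (metis dot_lmul_matrix vector_transpose_matrix)

lemma matrix_mul_cancel: "A ** B = mat 1 \<Longrightarrow> A ** (B ** X) = X"
  by (simp add: matrix_mul_assoc)

lemma matrix_inv_right: "invertible A \<Longrightarrow> A ** matrix_inv A = mat 1"
  and matrix_inv_left: "invertible A \<Longrightarrow> matrix_inv A ** A = mat 1"
  unfolding invertible_def matrix_inv_def by (metis (mono_tags, lifting) someI_ex)+

lemma matrix_inv_unique:
  fixes A :: "'a::field^'n^'n"
  assumes "A ** B = mat 1"
  shows "matrix_inv A = B"
proof -
  have "invertible A"
    using assms invertible_right_inverse by blast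
  then have "matrix_inv A = matrix_inv A ** (A ** B)"
    using assms by simp
  also have "\<dots> = B"
    using matrix_inv_left[OF \<open>invertible A\<close>] by (simp add: matrix_mul_assoc)
  finally show ?thesis .
qed

lemma matrix_inv_mult:
  fixes A B :: "'a::field^'n::finite^'n"
  assumes "invertible A" "invertible B"
  shows "matrix_inv (A ** B) = matrix_inv B ** matrix_inv A"
proof (rule matrix_inv_unique)
  have "A ** B ** (matrix_inv B ** matrix_inv A) = A ** (B ** matrix_inv B) ** matrix_inv A"
    by (simp add: matrix_mul_assoc)
  then show "A ** B ** (matrix_inv B ** matrix_inv A) = mat 1"
    by (simp add: matrix_inv_right assms)
qed

lemma transpose_matrix_inv:
  fixes A :: "'a::field^'n::finite^'n"
  assumes "invertible A"
  shows "transpose (matrix_inv A) = matrix_inv (transpose A)"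
proof -
  have "transpose A ** transpose (matrix_inv A) = mat 1"
    by (simp add: matrix_inv_left[OF assms] flip: matrix_transpose_mul)
  then show ?thesis
    by (rule matrix_inv_unique[symmetric])
qed

lemma invertible_iff_trivial_kernel:
  fixes A :: "'a::field^'n::finite^'n"
  shows "invertible A \<longleftrightarrow> (\<forall>x. A *v x = 0 \<longrightarrow> x = 0)"
  by (simp add: invertible_left_inverse matrix_left_invertible_ker)

lemma sum_UNIV_sum_type:
  "(\<Sum>k\<in>(UNIV::('b::finite + 'c::finite) set). f k) = (\<Sum>j\<in>UNIV. f (Inl j)) + (\<Sum>j\<in>UNIV. f (Inr j))"
  by (simp add: sum.Plus[of UNIV UNIV, unfolded UNIV_Plus_UNIV] comp_def)

lemma hcat_mult_left: "Z ** hcat A B = hcat (Z ** A) (Z ** B)"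
  by (simp add: hcat_def matrix_matrix_mult_def vec_eq_iff split: sum.split)

lemma hcat_mult_transpose:
  fixes E :: "'a::comm_semiring_1^'c::finite^'m"
  shows "hcat A B ** transpose (hcat C E) = A ** transpose C + B ** transpose E"
  by (simp add: hcat_def matrix_matrix_mult_def transpose_def vec_eq_iff sum_UNIV_sum_type)

lemma diag_mult: "diag a ** diag b = diag (\<lambda>i. a i * b i)"
proof -
  have "(\<Sum>k\<in>UNIV. (if i = k then a i else 0) * (if k = j then b k else 0))
      = (\<Sum>k\<in>UNIV. if k = i then a i * (if i = j then b i else 0) else 0)" for i j
    by (rule sum.cong) auto
  then show ?thesis
    by (simp add: diag_def matrix_matrix_mult_def vec_eq_iff)
qed

lemma transpose_diag [simp]: "transpose (diag a) = diag a"
  by (simp add: diag_def transpose_def vec_eq_iff)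

lemma diag_eq_mat_1: "(\<And>i. a i = 1) \<Longrightarrow> diag a = mat 1"
  by (simp add: diag_def mat_def vec_eq_iff)

lemma matrix_inv_diag:
  assumes "\<And>i. a i \<noteq> 0"
  shows "invertible (diag a)" and "matrix_inv (diag a) = diag (\<lambda>i. 1 / a i)"
proof -
  have right_inverse: "diag a ** diag (\<lambda>i. 1 / a i) = mat 1"
    by (simp add: diag_mult diag_eq_mat_1 assms)
  then show "invertible (diag a)"
    by (auto simp: invertible_right_inverse)
  from right_inverse show "matrix_inv (diag a) = diag (\<lambda>i. 1 / a i)"
    by (rule matrix_inv_unique)
qed

lemma diag_vector_mult: "diag a *v x = (\<chi> i. a i * x $ i)"
proof -
  have "(\<Sum>k\<in>UNIV. (if i = k then a i else 0) * x $ k)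
      = (\<Sum>k\<in>UNIV. if k = i then a i * x $ i else 0)" for i
    by (rule sum.cong) auto
  then show ?thesis
    by (simp add: diag_def matrix_vector_mult_def vec_eq_iff)
qed

lemma orthogonal_range_iff_transpose_kernel:
  fixes A :: "real^'m::finite^'n::finite"
  shows "(\<forall>z\<in>range ((*v) A). orthogonal z y) \<longleftrightarrow> transpose A *v y = 0"
proof -
  have "(\<forall>z\<in>range ((*v) A). orthogonal z y) \<longleftrightarrow> (\<forall>x. inner x (transpose A *v y) = 0)"
    by (simp add: orthogonal_def inner_matrix_vector_mult del: transpose_matrix_vector)
  moreover have "(\<forall>x. inner x v = 0) \<longleftrightarrow> v = 0" for v :: "real^'m"
    by (metis inner_eq_zero_iff inner_zero_right)
  ultimately show ?thesis
    by (simp only:)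
qed

lemma gram_sqrt_diag:
  fixes D :: "real^'m::finite^'n::finite"
  assumes "\<forall>i. e i > 0"
  shows "(transpose D ** diag (\<lambda>i. 1 / sqrt (e i)))
      ** transpose (transpose D ** diag (\<lambda>i. 1 / sqrt (e i)))
    = transpose D ** diag (\<lambda>i. 1 / e i) ** D"
proof -
  have "1 / sqrt (e i) * (1 / sqrt (e i)) = 1 / e i" for i
    using assms[rule_format, of i] by (simp add: field_simps)
  then have "diag (\<lambda>i. 1 / sqrt (e i)) ** diag (\<lambda>i. 1 / sqrt (e i)) = diag (\<lambda>i. 1 / e i)"
    by (simp add: diag_mult)
  then show ?thesis
    by (simp add: matrix_transpose_mul flip: matrix_mul_assoc) (simp add: matrix_mul_assoc)
qed

lemma invertible_gram_diag:
  fixes D :: "real^'m::finite^'n::finite"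
  assumes injective: "\<And>x. D *v x = 0 \<Longrightarrow> x = 0" and e_pos: "\<forall>i. e i > 0"
  shows "invertible (transpose D ** diag e ** D)"
proof -
  have "x = 0" if "(transpose D ** diag e ** D) *v x = 0" for x
  proof -
    let ?z = "D *v x"
    have "(\<Sum>i\<in>UNIV. e i * (?z $ i)\<^sup>2) = inner ?z (diag e *v ?z)"
      by (simp add: diag_vector_mult inner_vec_def power2_eq_square mult_ac)
    also have "\<dots> = inner x ((transpose D ** diag e ** D) *v x)"
      by (simp only: inner_matrix_vector_mult matrix_vector_mul_assoc matrix_mul_assoc)
    finally have "(\<Sum>i\<in>UNIV. e i * (?z $ i)\<^sup>2) = 0"
      using that by simp
    then have zero: "e i * (?z $ i)\<^sup>2 = 0" for i
      using e_pos sum_nonneg_eq_0_iff[of UNIV "\<lambda>i. e i * (?z $ i)\<^sup>2"] by (simp add: less_imp_le)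
    have "?z $ i = 0" for i
      using zero[of i] e_pos[rule_format, of i] by simp
    then have "?z = 0"
      by (simp add: vec_eq_iff)
    then show "x = 0"
      by (rule injective)
  qed
  then show ?thesis
    unfolding invertible_iff_trivial_kernel by blast
qed

section \<open>Complex matrices and the Hermitian inner product\<close>

lemma cmat_mult: "cmat (A ** B) = cmat A ** cmat B"
  by (simp add: cmat_def matrix_matrix_mult_def vec_eq_iff)

lemma cmat_scaleR: "cmat (r *\<^sub>R A) = r *\<^sub>R cmat A"
  by (auto simp: cmat_def vec_eq_iff) (simp add: of_real_def)

lemma cmat_mat: "cmat (mat c) = mat (complex_of_real c)"
  by (simp add: cmat_def mat_def vec_eq_iff)

lemma cmat_hcat: "cmat (hcat A B) = hcat (cmat A) (cmat B)"
  by (simp add: hcat_def cmat_def vec_eq_iff split: sum.split)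

lemma cmat_matrix_inv:
  fixes A :: "real^'n::finite^'n"
  assumes "invertible A"
  shows "invertible (cmat A)" and "matrix_inv (cmat A) = cmat (matrix_inv A)"
proof -
  have right_inverse: "cmat A ** cmat (matrix_inv A) = mat 1"
    by (simp add: matrix_inv_right[OF assms] cmat_mat flip: cmat_mult)
  then show "invertible (cmat A)"
    by (auto simp: invertible_right_inverse)
  from right_inverse show "matrix_inv (cmat A) = cmat (matrix_inv A)"
    by (rule matrix_inv_unique)
qed

lemma cadj_cadj [simp]: "cadj (cadj A) = A"
  by (simp add: cadj_def vec_eq_iff)

lemma cadj_mult: "cadj (A ** B) = cadj B ** cadj A"
  by (simp add: cadj_def vec_eq_iff matrix_matrix_mult_def cnj_sum mult_ac)

lemma cadj_add: "cadj (A + B) = cadj A + cadj B"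
  by (simp add: cadj_def vec_eq_iff)

lemma cadj_scaleR: "cadj (r *\<^sub>R A) = r *\<^sub>R cadj A"
  by (simp add: cadj_def vec_eq_iff)

lemma cadj_mat: "cadj (mat c) = mat (cnj c)"
  by (simp add: cadj_def mat_def vec_eq_iff)

lemma cadj_cmat: "cadj (cmat A) = cmat (transpose A)"
  by (simp add: cadj_def cmat_def transpose_def vec_eq_iff)

lemma norm_cadj_hcat:
  "(norm (cadj (hcat X Y) *v u))\<^sup>2 = (norm (cadj X *v u))\<^sup>2 + (norm (cadj Y *v u))\<^sup>2"
proof -
  have "cadj (hcat X Y) *v u
      = (\<chi> k. case k of Inl j \<Rightarrow> (cadj X *v u) $ j | Inr j \<Rightarrow> (cadj Y *v u) $ j)"
    by (simp add: vec_eq_iff cadj_def hcat_def matrix_vector_mult_def split: sum.split)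
  then show ?thesis
    by (simp add: norm_vec_def L2_set_def sum_nonneg sum_UNIV_sum_type)
qed

definition cinner :: "complex^'n::finite \<Rightarrow> complex^'n \<Rightarrow> complex" where
  "cinner u v = (\<Sum>i\<in>UNIV. cnj (u $ i) * v $ i)"

lemma Re_cinner: "Re (cinner u v) = inner u v"
  by (simp add: cinner_def inner_vec_def inner_complex_def)

lemma cinner_self: "cinner v v = complex_of_real ((norm v)\<^sup>2)"
proof -
  have "Im (cinner v v) = 0"
    by (simp add: cinner_def Im_sum algebra_simps)
  then show ?thesis
    by (simp add: complex_eq_iff Re_cinner power2_norm_eq_inner)
qed

lemma cnj_cinner: "cnj (cinner u v) = cinner v u"
  by (simp add: cinner_def mult.commute)

lemma cinner_add_left: "cinner (u + v) w = cinner u w + cinner v w"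
  and cinner_add_right: "cinner u (v + w) = cinner u v + cinner u w"
  and cinner_scale_left: "cinner (c *s u) v = cnj c * cinner u v"
  and cinner_scale_right: "cinner u (c *s v) = c * cinner u v"
  by (simp_all add: cinner_def sum.distrib sum_distrib_left algebra_simps)

lemma cinner_cadj: "cinner u (cadj A *v v) = cinner (A *v u) v"
proof -
  have "cinner u (cadj A *v v) = (\<Sum>i\<in>UNIV. \<Sum>j\<in>UNIV. cnj (u $ i) * cnj (A $ j $ i) * v $ j)"
    unfolding cinner_def cadj_def matrix_vector_mult_def by (simp add: sum_distrib_left mult_ac)
  also have "\<dots> = (\<Sum>j\<in>UNIV. \<Sum>i\<in>UNIV. cnj (u $ i) * cnj (A $ j $ i) * v $ j)"
    by (rule sum.swap)
  also have "\<dots> = cinner (A *v u) v"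
    unfolding cinner_def matrix_vector_mult_def
    by (simp add: cnj_sum sum_distrib_right sum_distrib_left mult_ac)
  finally show ?thesis .
qed

lemma inner_cadj: "inner u (cadj A *v v) = inner (A *v u) v"
  by (metis Re_cinner cinner_cadj)

lemma Im_cinner_cmat_symmetric:
  assumes "transpose S = S"
  shows "Im (cinner x (cmat S *v x)) = 0"
proof -
  have "cinner x (cmat S *v x) = cnj (cinner x (cmat S *v x))"
    by (metis assms cadj_cmat cinner_cadj cnj_cinner)
  then show ?thesis
    by (metis cnj.sel(2) neg_equal_zero)
qed

lemma cinner_cmat_diag:
  "cinner (cmat (diag a) *v x) x = complex_of_real (\<Sum>i\<in>UNIV. a i * (cmod (x $ i))\<^sup>2)"
proof -
  have diag_x: "cmat (diag a) *v x = (\<chi> i. complex_of_real (a i) * x $ i)"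
  proof -
    have "(\<Sum>k\<in>UNIV. complex_of_real (if i = k then a i else 0) * x $ k)
        = (\<Sum>k\<in>UNIV. if k = i then complex_of_real (a i) * x $ i else 0)" for i
      by (rule sum.cong) auto
    then show ?thesis
      by (simp add: diag_def cmat_def matrix_vector_mult_def vec_eq_iff)
  qed
  have "cnj (complex_of_real (a i) * x $ i) * x $ i = complex_of_real (a i * (cmod (x $ i))\<^sup>2)"
    for i
  proof -
    have "cnj (complex_of_real (a i) * x $ i) * x $ i
        = complex_of_real (a i) * (cnj (x $ i) * x $ i)"
      by (simp add: mult.assoc)
    also have "cnj (x $ i) * x $ i = complex_of_real ((cmod (x $ i))\<^sup>2)"
      by (metis complex_norm_square mult.commute)
    finally show ?thesis
      by (simp only: of_real_mult)
  qed
  then have "cinner (cmat (diag a) *v x) x = (\<Sum>i\<in>UNIV. complex_of_real (a i * (cmod (x $ i))\<^sup>2))"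
    by (simp only: cinner_def diag_x vec_lambda_beta)
  then show ?thesis
    by (simp only: of_real_sum)
qed

lemma norm_le_norm_add_imaginary:
  assumes "Im (cinner a b) = 0" and "Re c = 0"
  shows "norm a \<le> norm (a + c *s b)"
proof -
  have "cinner (a + c *s b) (a + c *s b)
      = cinner a a + (c * cinner a b + cnj (c * cinner a b)) + cnj c * c * cinner b b"
    by (simp add: cinner_add_left cinner_add_right cinner_scale_left cinner_scale_right
        cnj_cinner algebra_simps)
  also have "c * cinner a b + cnj (c * cinner a b) = 0"
    using assms by (simp add: complex_eq_iff)
  also have "cnj c * c * cinner b b = complex_of_real ((cmod c * norm b)\<^sup>2)"
    by (metis cinner_self complex_norm_square mult.commute of_real_mult power_mult_distrib)
  finally have "complex_of_real ((norm (a + c *s b))\<^sup>2)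
      = complex_of_real ((norm a)\<^sup>2 + (cmod c * norm b)\<^sup>2)"
    by (simp only: cinner_self of_real_add add_0_right)
  then have "(norm (a + c *s b))\<^sup>2 = (norm a)\<^sup>2 + (cmod c * norm b)\<^sup>2"
    by (simp only: of_real_eq_iff)
  then show ?thesis
    by (metis le_add_same_cancel1 norm_ge_zero power2_le_imp_le zero_le_power2)
qed

section \<open>The largest singular value as an operator norm\<close>

lemma scaleR_eq_of_real_scale: "x *\<^sub>R v = complex_of_real x *s (v::complex^'n)"
  by (auto simp: vec_eq_iff) (simp add: scaleR_conv_of_real)

lemma onorm_attained:
  fixes f :: "'a::euclidean_space \<Rightarrow> 'b::real_normed_vector"
  assumes "bounded_linear f"
  shows "\<exists>v. norm v = 1 \<and> norm (f v) = onorm f"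
proof -
  let ?S = "sphere (0::'a) 1"
  obtain b :: 'a where "b \<in> Basis"
    using nonempty_Basis by blast
  then have "?S \<noteq> {}"
    by (auto dest: norm_Basis)
  moreover have "continuous_on ?S (\<lambda>v. norm (f v))"
    using assms by (intro continuous_on_norm linear_continuous_on)
  ultimately obtain v where v: "v \<in> ?S" and max: "\<And>u. u \<in> ?S \<Longrightarrow> norm (f u) \<le> norm (f v)"
    using continuous_attains_sup[OF compact_sphere] by metis
  have "norm (f u) \<le> norm (f v) * norm u" for u
  proof (cases "u = 0")
    case False
    then have "norm (f ((1 / norm u) *\<^sub>R u)) \<le> norm (f v)"
      by (intro max) simp
    with False show ?thesis
      by (simp add: linear_simps[OF assms] field_simps)
  qed (simp add: linear_simps[OF assms])
  then have "onorm f \<le> norm (f v)"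
    by (rule onorm_le)
  moreover have "norm (f v) \<le> onorm f"
    using onorm[OF assms, of v] v by simp
  ultimately show ?thesis
    using v by (intro exI[of _ v]) simp
qed

lemma finite_eigenvalues_self_adjoint:
  fixes H :: "'a::euclidean_space \<Rightarrow> 'a"
  assumes self_adjoint: "\<And>x y. inner (H x) y = inner x (H y)"
  shows "finite {x. \<exists>v. v \<noteq> 0 \<and> H v = x *\<^sub>R v}"
proof -
  let ?E = "{x. \<exists>v. v \<noteq> 0 \<and> H v = x *\<^sub>R v}"
  define vec where "vec x = (SOME v. v \<noteq> 0 \<and> H v = x *\<^sub>R v)" for x
  have vec: "vec x \<noteq> 0" "H (vec x) = x *\<^sub>R vec x" if "x \<in> ?E" for x
    using someI_ex[OF that[simplified]] unfolding vec_def by blast+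
  have "inj_on vec ?E"
    by (rule inj_onI) (metis vec scaleR_cancel_right)
  moreover have "pairwise orthogonal (vec ` ?E)"
  proof (rule pairwise_imageI)
    fix x y assume "x \<in> ?E" "y \<in> ?E" "x \<noteq> y"
    have "x * inner (vec x) (vec y) = y * inner (vec x) (vec y)"
      using self_adjoint[of "vec x" "vec y"] vec[OF \<open>x \<in> ?E\<close>] vec[OF \<open>y \<in> ?E\<close>] by simp
    with \<open>x \<noteq> y\<close> show "orthogonal (vec x) (vec y)"
      by (simp add: orthogonal_def)
  qed
  ultimately show ?thesis
    using finite_imageD pairwise_orthogonal_imp_finite by blast
qed

lemma onorm_cadj_le: "onorm ((*v) (cadj A)) \<le> onorm ((*v) A)"
proof (rule onorm_le)
  fix u
  let ?s = "onorm ((*v) A)" and ?x = "cadj A *v u"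
  have "(norm ?x)\<^sup>2 = inner (A *v ?x) u"
    by (simp add: power2_norm_eq_inner inner_cadj)
  also have "\<dots> \<le> norm (A *v ?x) * norm u"
    by (rule norm_cauchy_schwarz)
  also have "\<dots> \<le> ?s * norm ?x * norm u"
    by (simp add: onorm mult_right_mono)
  finally show "norm ?x \<le> ?s * norm u"
    by (cases "?x = 0") (simp_all add: onorm_pos_le power2_eq_square mult_ac)
qed

lemma onorm_cadj: "onorm ((*v) (cadj A)) = onorm ((*v) A)"
  using onorm_cadj_le[of A] onorm_cadj_le[of "cadj A"] by simp

lemma eigenvalue_cadj_mult_le:
  assumes "v \<noteq> 0" and "(cadj A ** A) *v v = x *\<^sub>R v"
  shows "x \<le> (onorm ((*v) A))\<^sup>2"
proof -
  have "x * (norm v)\<^sup>2 = (norm (A *v v))\<^sup>2"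
    by (metis assms(2) inner_cadj inner_scaleR_right matrix_vector_mul_assoc power2_norm_eq_inner)
  also have "\<dots> \<le> (onorm ((*v) A) * norm v)\<^sup>2"
    by (simp add: onorm power_mono)
  finally show ?thesis
    using assms(1) by (simp add: power_mult_distrib)
qed

lemma onorm_maximizer_eigenvector:
  assumes "norm v = 1" and "norm (A *v v) = onorm ((*v) A)"
  shows "(cadj A ** A) *v v = (onorm ((*v) A))\<^sup>2 *\<^sub>R v"
proof -
  let ?s = "onorm ((*v) A)" and ?h = "(cadj A ** A) *v v"
  have "norm ?h \<le> ?s\<^sup>2"
    using onorm[of "(*v) (cadj A)" "A *v v"] assms
    by (simp add: onorm_cadj power2_eq_square flip: matrix_vector_mul_assoc)
  then have "(norm ?h)\<^sup>2 \<le> (?s\<^sup>2)\<^sup>2"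
    by (rule power_mono) simp
  moreover have "inner v ?h = (norm (A *v v))\<^sup>2"
    by (simp add: inner_cadj power2_norm_eq_inner flip: matrix_vector_mul_assoc)
  then have "inner ?h (?s\<^sup>2 *\<^sub>R v) = (?s\<^sup>2)\<^sup>2" "(norm (?s\<^sup>2 *\<^sub>R v))\<^sup>2 = (?s\<^sup>2)\<^sup>2"
    using assms by (simp_all add: inner_commute power2_eq_square)
  then have "(norm (?h - ?s\<^sup>2 *\<^sub>R v))\<^sup>2 = (norm ?h)\<^sup>2 - (?s\<^sup>2)\<^sup>2"
    using dot_norm_neg[of ?h "?s\<^sup>2 *\<^sub>R v"] by argo
  ultimately have "(norm (?h - ?s\<^sup>2 *\<^sub>R v))\<^sup>2 \<le> 0"
    by simp
  then show ?thesis
    by simp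
qed

lemma sigma_max_eq_onorm: "sigma_max A = onorm ((*v) A)"
proof -
  let ?s = "onorm ((*v) A)" and ?H = "cadj A ** A"
  let ?E = "{x::real. \<exists>v. v \<noteq> 0 \<and> ?H *v v = x *\<^sub>R v}"
  obtain v where "norm v = 1" "norm (A *v v) = ?s"
    using onorm_attained[of "(*v) A"] by auto
  then have "?H *v v = ?s\<^sup>2 *\<^sub>R v" and "v \<noteq> 0"
    by (auto intro: onorm_maximizer_eigenvector)
  then have "?s\<^sup>2 \<in> ?E"
    by blast
  moreover have "finite ?E"
    by (rule finite_eigenvalues_self_adjoint)
      (metis inner_cadj inner_commute matrix_vector_mul_assoc)
  ultimately have "Max ?E = ?s\<^sup>2"
    using eigenvalue_cadj_mult_le by (intro Max_eqI) auto
  then show ?thesis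
    by (simp add: sigma_max_def onorm_pos_le flip: scaleR_eq_of_real_scale)
qed

lemma sigma_max_cadj: "sigma_max (cadj A) = sigma_max A"
  by (simp add: sigma_max_eq_onorm onorm_cadj)

lemma sigma_max_mult_cadj: "sigma_max (A ** cadj A) = (sigma_max A)\<^sup>2"
proof -
  let ?s = "onorm ((*v) A)"
  have "onorm ((*v) (A ** cadj A)) \<le> ?s\<^sup>2"
  proof (rule onorm_le)
    fix u
    have "norm (A *v (cadj A *v u)) \<le> ?s * norm (cadj A *v u)"
      by (simp add: onorm)
    also have "\<dots> \<le> ?s * (?s * norm u)"
      using onorm[of "(*v) (cadj A)" u] by (simp add: onorm_cadj mult_left_mono onorm_pos_le)
    finally show "norm ((A ** cadj A) *v u) \<le> ?s\<^sup>2 * norm u"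
      by (simp add: matrix_vector_mul_assoc power2_eq_square mult_ac)
  qed
  moreover have "?s\<^sup>2 \<le> onorm ((*v) (A ** cadj A))"
  proof -
    obtain v where v: "norm v = 1" "norm (cadj A *v v) = ?s"
      using onorm_attained[of "(*v) (cadj A)"] by (auto simp: onorm_cadj)
    have "?s\<^sup>2 = inner v ((A ** cadj A) *v v)"
      by (metis v(2) inner_cadj inner_commute matrix_vector_mul_assoc power2_norm_eq_inner)
    also have "\<dots> \<le> norm ((A ** cadj A) *v v)"
      using norm_cauchy_schwarz[of v] v(1) by simp
    also have "\<dots> \<le> onorm ((*v) (A ** cadj A))"
      using onorm[of "(*v) (A ** cadj A)" v] v(1) by simp
    finally show ?thesis .
  qed
  ultimately show ?thesis
    by (simp add: sigma_max_eq_onorm)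
qed

lemma sigma_max_cmat_squared: "(sigma_max (cmat G))\<^sup>2 = sigma_max (cmat (G ** transpose G))"
  by (simp add: cmat_mult cadj_cmat flip: sigma_max_mult_cadj)

lemma onorm_sq_eq_combination:
  fixes f :: "'a::euclidean_space \<Rightarrow> 'b::real_normed_vector" and g :: "'a \<Rightarrow> 'c::real_normed_vector"
  assumes "bounded_linear f" "bounded_linear g" "a \<ge> 0" "b \<ge> 0"
    and norm_f: "\<And>x. (norm (f x))\<^sup>2 = a * (norm (g x))\<^sup>2 + b * (norm x)\<^sup>2"
  shows "(onorm f)\<^sup>2 = a * (onorm g)\<^sup>2 + b"
proof -
  define c where "c = sqrt (a * (onorm g)\<^sup>2 + b)"
  have c: "c \<ge> 0" "c\<^sup>2 = a * (onorm g)\<^sup>2 + b"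
    using assms by (simp_all add: c_def)
  have "onorm f \<le> c"
  proof (rule onorm_le)
    fix x
    have "(norm (f x))\<^sup>2 \<le> a * (onorm g * norm x)\<^sup>2 + b * (norm x)\<^sup>2"
      using onorm[OF assms(2), of x] assms(3) by (simp add: norm_f mult_left_mono power_mono)
    also have "\<dots> = (c * norm x)\<^sup>2"
      by (simp add: c power_mult_distrib algebra_simps)
    finally show "norm (f x) \<le> c * norm x"
      by (rule power2_le_imp_le) (simp add: c)
  qed
  moreover have "c \<le> onorm f"
  proof -
    obtain v where v: "norm v = 1" "norm (g v) = onorm g"
      using onorm_attained[OF assms(2)] by blast
    then have "norm (f v) = c"
      using norm_f[of v] c by (metis power2_eq_imp_eq norm_ge_zero mult.right_neutral power_one)
    then show ?thesis
      using onorm[OF assms(1), of v] v(1) by simp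
  qed
  ultimately show ?thesis
    using c by simp
qed

lemma sigma_max_hcat_scaled_identity:
  "(sigma_max (cmat (hcat (a *\<^sub>R G) (b *\<^sub>R mat 1))))\<^sup>2 = a\<^sup>2 * (sigma_max (cmat G))\<^sup>2 + b\<^sup>2"
proof -
  let ?X = "cmat (hcat (a *\<^sub>R G) (b *\<^sub>R mat 1))"
  have "(norm (cadj ?X *v u))\<^sup>2 = a\<^sup>2 * (norm (cadj (cmat G) *v u))\<^sup>2 + b\<^sup>2 * (norm u)\<^sup>2" for u
  proof -
    have "cadj (cmat (a *\<^sub>R G)) *v u = a *\<^sub>R (cadj (cmat G) *v u)"
      by (simp add: cmat_scaleR cadj_scaleR scaleR_matrix_vector_mult)
    moreover have "cadj (cmat (b *\<^sub>R mat 1)) *v u = b *\<^sub>R u"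
      by (simp add: cmat_scaleR cadj_scaleR scaleR_matrix_vector_mult cmat_mat cadj_mat)
    ultimately show ?thesis
      by (simp add: cmat_hcat norm_cadj_hcat power_mult_distrib)
  qed
  then have "(onorm ((*v) (cadj ?X)))\<^sup>2 = a\<^sup>2 * (onorm ((*v) (cadj (cmat G))))\<^sup>2 + b\<^sup>2"
    by (intro onorm_sq_eq_combination) auto
  then show ?thesis
    by (simp add: sigma_max_eq_onorm onorm_cadj)
qed

section \<open>The H-infinity norm of a resolvent\<close>

lemma hinf_norm_eq_at_zero:
  assumes "\<And>\<omega> u. norm (cadj (\<Phi> (\<i> * complex_of_real \<omega>)) *v u) \<le> norm (cadj (\<Phi> 0) *v u)"
  shows "hinf_norm \<Phi> = sigma_max (\<Phi> 0)"
  unfolding hinf_norm_def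
proof (rule cSup_eq_maximum)
  show "sigma_max (\<Phi> 0) \<in> range (\<lambda>\<omega>. sigma_max (\<Phi> (\<i> * complex_of_real \<omega>)))"
    by (rule range_eqI[of _ _ 0]) simp
next
  fix x assume "x \<in> range (\<lambda>\<omega>. sigma_max (\<Phi> (\<i> * complex_of_real \<omega>)))"
  then obtain \<omega> where x: "x = sigma_max (cadj (\<Phi> (\<i> * complex_of_real \<omega>)))"
    by (auto simp: sigma_max_cadj)
  have "norm (cadj (\<Phi> (\<i> * complex_of_real \<omega>)) *v u) \<le> sigma_max (\<Phi> 0) * norm u" for u
    using assms[of \<omega> u] onorm[of "(*v) (cadj (\<Phi> 0))" u]
    by (simp add: sigma_max_eq_onorm onorm_cadj)
  then show "x \<le> sigma_max (\<Phi> 0)"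
    unfolding x sigma_max_eq_onorm by (rule onorm_le)
qed

lemma norm_cadj_resolvent_le:
  fixes A :: "real^'n::finite^'n" and B :: "real^'m::finite^'n" and \<omega> :: real
  defines "s \<equiv> \<i> * complex_of_real \<omega>"
  assumes "invertible A" and "invertible (mat s + cmat A)"
    and symmetric: "transpose (matrix_inv A ** B ** transpose B) = matrix_inv A ** B ** transpose B"
  shows "norm (cadj (matrix_inv (mat s + cmat A) ** cmat B) *v u)
      \<le> norm (cadj (cmat (matrix_inv A ** B)) *v u)"
proof -
  let ?M = "mat s + cmat A" and ?K = "matrix_inv A"
  define y where "y = cadj (matrix_inv ?M) *v u"
  have "cadj ?M *v y = u"
    by (simp add: y_def matrix_vector_mul_assoc flip: cadj_mult)
      (simp add: matrix_inv_left[OF assms(3)] cadj_mat)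
  then have u: "u = cnj s *s y + cmat (transpose A) *v y"
    by (simp add: cadj_add cadj_mat cadj_cmat matrix_vector_mult_add_rdistrib mat_vector_mult)
  define a where "a = cmat (transpose B) *v y"
  define b where "b = cmat (transpose B ** transpose ?K) *v y"
  have "norm (cadj (matrix_inv ?M ** cmat B) *v u) = norm a"
    by (simp add: a_def y_def cadj_mult cadj_cmat matrix_vector_mul_assoc)
  also have "\<dots> \<le> norm (a + cnj s *s b)"
  proof (rule norm_le_norm_add_imaginary)
    have "cinner a b = cinner y (cmat (transpose (?K ** B ** transpose B)) *v y)"
      by (simp add: a_def b_def cinner_cadj[symmetric] cadj_cmat matrix_vector_mul_assoc
          matrix_transpose_mul matrix_mul_assoc flip: cmat_mult)
    then show "Im (cinner a b) = 0"
      using Im_cinner_cmat_symmetric[of "transpose (?K ** B ** transpose B)"] symmetric by simp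
  qed (simp add: s_def)
  also have "a + cnj s *s b = cadj (cmat (?K ** B)) *v u"
  proof -
    have "transpose B ** transpose ?K ** transpose A = transpose B"
      by (simp add: matrix_mul_assoc matrix_inv_right[OF assms(2)] flip: matrix_transpose_mul)
    then show ?thesis
      by (simp add: u a_def b_def cadj_cmat matrix_vector_right_distrib vector_scalar_commute
          matrix_vector_mul_assoc matrix_transpose_mul flip: cmat_mult)
  qed
  finally show ?thesis .
qed

lemma hinf_norm_resolvent:
  fixes A :: "real^'n::finite^'n" and B :: "real^'m::finite^'n" and C :: "real^'n^'p::finite"
  assumes "invertible A" and "\<And>\<omega>. invertible (mat (\<i> * complex_of_real \<omega>) + cmat A)"
    and "transpose (matrix_inv A ** B ** transpose B) = matrix_inv A ** B ** transpose B"
  shows "hinf_norm (\<lambda>s. cmat C ** (matrix_inv (mat s + cmat A) ** cmat B))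
      = sigma_max (cmat (C ** matrix_inv A ** B))"
proof -
  have dc_gain: "matrix_inv (cmat A) ** cmat B = cmat (matrix_inv A ** B)"
    by (simp add: cmat_matrix_inv assms(1) cmat_mult)
  have "hinf_norm (\<lambda>s. cmat C ** (matrix_inv (mat s + cmat A) ** cmat B))
      = sigma_max (cmat C ** (matrix_inv (mat 0 + cmat A) ** cmat B))"
  proof (rule hinf_norm_eq_at_zero)
    fix \<omega> u
    show "norm (cadj (cmat C ** (matrix_inv (mat (\<i> * complex_of_real \<omega>) + cmat A) ** cmat B)) *v u)
        \<le> norm (cadj (cmat C ** (matrix_inv (mat 0 + cmat A) ** cmat B)) *v u)"
      using norm_cadj_resolvent_le[OF assms(1,2,3), of \<omega> "cadj (cmat C) *v u"]
      by (simp add: dc_gain cadj_mult flip: matrix_vector_mul_assoc)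
  qed
  then show ?thesis
    by (simp add: dc_gain cmat_mult matrix_mul_assoc)
qed

(* Pair (i omega + L W) x = 0 with W x: x^H W x > 0 unless x = 0, while x^H W L W x is real. *)
lemma invertible_imaginary_shift:
  fixes L :: "real^'n::finite^'n" and \<omega> :: real
  assumes L_sym: "transpose L = L" and "invertible L" and w_pos: "\<forall>i. w i > 0"
  shows "invertible (mat (\<i> * complex_of_real \<omega>) + cmat (L ** diag w))"
proof (cases "\<omega> = 0")
  case True
  have "\<And>i. w i \<noteq> 0"
    using w_pos by (metis less_irrefl)
  then have "invertible (L ** diag w)"
    using assms(2) by (intro invertible_mult matrix_inv_diag)
  then show ?thesis
    by (simp add: True mat_0 cmat_matrix_inv)
next
  case False
  let ?s = "\<i> * complex_of_real \<omega>"
  have "x = 0" if "(mat ?s + cmat (L ** diag w)) *v x = 0" for x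
  proof -
    define z where "z = cmat (diag w) *v x"
    define r where "r = (\<Sum>i\<in>UNIV. w i * (cmod (x $ i))\<^sup>2)"
    have "0 = cinner z ((mat ?s + cmat (L ** diag w)) *v x)"
      using that by (simp add: cinner_def)
    also have "\<dots> = ?s * complex_of_real r + cinner z (cmat L *v z)"
      by (simp add: z_def r_def matrix_vector_mult_add_rdistrib mat_vector_mult cinner_add_right
          cinner_scale_right cinner_cmat_diag cmat_mult matrix_vector_mul_assoc)
    finally have "\<omega> * r = 0"
      using Im_cinner_cmat_symmetric[OF L_sym, of z] by (simp add: complex_eq_iff)
    then have zero: "w i * (cmod (x $ i))\<^sup>2 = 0" for i
      using False w_pos sum_nonneg_eq_0_iff[of UNIV "\<lambda>i. w i * (cmod (x $ i))\<^sup>2"]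
      by (simp add: r_def less_imp_le)
    have "x $ i = 0" for i
      using zero[of i] w_pos[rule_format, of i] by simp
    then show "x = 0"
      by (simp add: vec_eq_iff)
  qed
  then show ?thesis
    unfolding invertible_iff_trivial_kernel by blast
qed

section \<open>Incidence matrices of trees\<close>

lemma transpose_incidence_vector_mult:
  assumes "\<forall>l. src l \<noteq> tgt l"
  shows "(transpose (incidence src tgt) *v y) $ l = y $ src l - y $ tgt l"
proof -
  have "(transpose (incidence src tgt) *v y) $ l =
        (\<Sum>i\<in>UNIV. (if i = src l then y $ i else 0) - (if i = tgt l then y $ i else 0))"
    unfolding incidence_def transpose_def matrix_vector_mult_def using assms
    by (auto intro!: sum.cong)
  also have "\<dots> = y $ src l - y $ tgt l"
    by (simp add: sum_subtractf)
  finally show ?thesis .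
qed

lemma incidence_left_kernel:
  fixes src tgt :: "'e::finite \<Rightarrow> 'n::finite"
  assumes no_loops: "\<forall>l. src l \<noteq> tgt l"
    and connected: "\<forall>i j. (i, j) \<in> ({(src l, tgt l) | l. True} \<union> {(tgt l, src l) | l. True})\<^sup>*"
  shows "transpose (incidence src tgt) *v y = 0 \<longleftrightarrow> y \<in> span {\<chi> i. 1}"
proof
  assume "transpose (incidence src tgt) *v y = 0"
  then have edge: "y $ src l = y $ tgt l" for l
    using transpose_incidence_vector_mult[OF no_loops, of y l] by simp
  have "y $ i = y $ j"
    if "(i, j) \<in> ({(src l, tgt l) | l. True} \<union> {(tgt l, src l) | l. True})\<^sup>*" for i j
    using that by (induction rule: rtrancl_induct) (auto simp: edge)
  then have "y = (y $ undefined) *\<^sub>R (\<chi> i. 1)"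
    using connected by (auto simp: vec_eq_iff)
  then show "y \<in> span {\<chi> i. 1}"
    by (metis span_singleton rangeI)
next
  assume "y \<in> span {\<chi> i. 1}"
  then obtain c where "y = c *\<^sub>R (\<chi> i. 1)"
    by (auto simp: span_singleton)
  then have "(transpose (incidence src tgt) *v y) $ l = 0" for l
    by (simp only: transpose_incidence_vector_mult[OF no_loops]) simp
  then show "transpose (incidence src tgt) *v y = 0"
    by (simp add: vec_eq_iff del: transpose_matrix_vector)
qed

(* Connectivity makes the left kernel of D the constants, so rank D = n - 1 = number of edges. *)
lemma incidence_injective:
  assumes "is_tree src tgt" and "incidence src tgt *v (x::real^'e::finite) = (0::real^'n::finite)"
  shows "x = 0"
proof -
  let ?D = "incidence src tgt"
  let ?R = "range ((*v) ?D)" and ?one = "(\<chi> i. 1) :: real^'n"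
  have edges: "CARD('e) + 1 = CARD('n)"
    using assms(1) unfolding is_tree_def by auto
  have "(\<forall>z\<in>?R. orthogonal z y) \<longleftrightarrow> transpose ?D *v y = 0" for y
    by (rule orthogonal_range_iff_transpose_kernel)
  then have "{y \<in> UNIV. \<forall>z\<in>?R. orthogonal z y} = span {?one}"
    using incidence_left_kernel assms(1) unfolding is_tree_def by blast
  moreover have "dim {y \<in> UNIV. \<forall>z\<in>?R. orthogonal z y} + dim ?R = dim (UNIV :: (real^'n) set)"
    by (rule dim_subspace_orthogonal_to_vectors)
      (simp_all add: subspace_UNIV linear_subspace_image[OF matrix_vector_mul_linear subspace_UNIV])
  moreover have "?one \<noteq> 0"
    by (simp add: vec_eq_iff)
  ultimately have "rank ?D = CARD('e)"
    using edges by (simp add: rank_dim_range dim_span)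
  then have "inj ((*v) ?D)"
    by (simp add: full_rank_injective)
  then show ?thesis
    using assms(2) by (metis injD matrix_vector_mult_0_right)
qed

section \<open>The edge-consensus model\<close>

lemma weight_identities:
  fixes w :: "'e::finite \<Rightarrow> real"
  assumes w_pos: "\<forall>l. w l > 0"
  shows "matrix_inv (diag w) = diag (\<lambda>l. 1 / w l)"
    and "matrix_inv (diag (\<lambda>l. sqrt (w l))) = diag (\<lambda>l. 1 / sqrt (w l))"
    and "invertible (diag w)" and "invertible (diag (\<lambda>l. sqrt (w l)))"
    and "diag (\<lambda>l. sqrt (w l)) ** diag (\<lambda>l. sqrt (w l)) = diag w"
    and "diag (\<lambda>l. sqrt (w l)) ** diag (\<lambda>l. 1 / w l) = diag (\<lambda>l. 1 / sqrt (w l))"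
proof -
  have w: "w l \<noteq> 0" "sqrt (w l) * sqrt (w l) = w l" "sqrt (w l) / w l = 1 / sqrt (w l)" for l
    using w_pos[rule_format, of l] by (auto simp: field_simps)
  show "matrix_inv (diag w) = diag (\<lambda>l. 1 / w l)" "invertible (diag w)"
    "matrix_inv (diag (\<lambda>l. sqrt (w l))) = diag (\<lambda>l. 1 / sqrt (w l))"
    "invertible (diag (\<lambda>l. sqrt (w l)))"
    using w by (simp_all add: matrix_inv_diag)
  show "diag (\<lambda>l. sqrt (w l)) ** diag (\<lambda>l. sqrt (w l)) = diag w"
    "diag (\<lambda>l. sqrt (w l)) ** diag (\<lambda>l. 1 / w l) = diag (\<lambda>l. 1 / sqrt (w l))"
    using w by (simp_all add: diag_mult)
qed

context
  fixes L :: "real^'e::finite^'e" and w :: "'e \<Rightarrow> real"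
  assumes L_inv: "invertible L" and w_pos: "\<forall>l. w l > 0"
begin

lemma inverse_cancellations:
  "matrix_inv L ** L = mat 1" "diag (\<lambda>l. 1 / w l) ** diag w = mat 1"
  "diag (\<lambda>l. 1 / sqrt (w l)) ** diag (\<lambda>l. sqrt (w l)) = mat 1"
  "matrix_inv L ** (L ** X) = X" "L ** (matrix_inv L ** X) = X"
  "diag (\<lambda>l. 1 / w l) ** (diag w ** X) = X"
  "diag (\<lambda>l. 1 / sqrt (w l)) ** (diag (\<lambda>l. sqrt (w l)) ** X) = X"
  using matrix_inv_left[OF L_inv] matrix_inv_right[OF L_inv]
    matrix_inv_left[OF weight_identities(3)[OF w_pos]]
    matrix_inv_left[OF weight_identities(4)[OF w_pos]]
  by (simp_all add: matrix_mul_cancel weight_identities[OF w_pos])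

lemma matrix_inv_mult_weights: "matrix_inv (L ** diag w) = diag (\<lambda>l. 1 / w l) ** matrix_inv L"
  by (simp add: matrix_inv_mult L_inv weight_identities[OF w_pos])

(* F plays the role of D^T E^-1/2, so that L = F F^T, and B is the input matrix of the model. *)
context
  fixes F :: "real^'n::finite^'e" and sw sv :: real and B :: "real^('n + 'e)^'e"
  assumes F_gram: "F ** transpose F = L"
    and B_def: "B = hcat (sw *\<^sub>R F) ((- sv) *\<^sub>R (L ** diag (\<lambda>l. sqrt (w l))))"
begin

lemma L_symmetric: "transpose L = L"
  by (metis F_gram matrix_transpose_mul transpose_transpose)

lemma input_gram: "B ** transpose B = sw\<^sup>2 *\<^sub>R L + sv\<^sup>2 *\<^sub>R (L ** (diag w ** L))"
proof -
  have "B ** transpose B = sw\<^sup>2 *\<^sub>R (F ** transpose F) + (- sv)\<^sup>2 *\<^sub>R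
      (L ** (diag (\<lambda>l. sqrt (w l)) ** transpose (diag (\<lambda>l. sqrt (w l)))) ** transpose L)"
    by (simp only: B_def hcat_mult_transpose scaleR_mult_transpose matrix_transpose_mul
        matrix_mul_assoc)
  then show ?thesis
    by (simp add: F_gram L_symmetric weight_identities[OF w_pos] matrix_mul_assoc)
qed

lemma dc_gain_mult_input_transpose:
  "matrix_inv (L ** diag w) ** B ** transpose B = sw\<^sup>2 *\<^sub>R diag (\<lambda>l. 1 / w l) + sv\<^sup>2 *\<^sub>R L"
  by (simp add: matrix_inv_mult_weights input_gram matrix_add_ldistrib matrix_scalar_ac
      inverse_cancellations flip: matrix_mul_assoc scalar_matrix_assoc)

lemma dc_gain_gram:
  "matrix_inv (L ** diag w) ** B ** transpose (matrix_inv (L ** diag w) ** B)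
    = sw\<^sup>2 *\<^sub>R matrix_inv (diag w ** L ** diag w) + sv\<^sup>2 *\<^sub>R diag (\<lambda>l. 1 / w l)"
proof -
  let ?Winv = "diag (\<lambda>l. 1 / w l)"
  have "matrix_inv (L ** diag w) ** B ** transpose (matrix_inv (L ** diag w) ** B)
      = matrix_inv (L ** diag w) ** B ** transpose B ** (matrix_inv L ** ?Winv)"
    by (simp add: matrix_transpose_mul matrix_inv_mult_weights transpose_matrix_inv[OF L_inv]
        L_symmetric matrix_mul_assoc)
  also have "\<dots> = (sw\<^sup>2 *\<^sub>R ?Winv + sv\<^sup>2 *\<^sub>R L) ** (matrix_inv L ** ?Winv)"
    by (simp only: dc_gain_mult_input_transpose)
  also have "\<dots> = sw\<^sup>2 *\<^sub>R (?Winv ** matrix_inv L ** ?Winv) + sv\<^sup>2 *\<^sub>R ?Winv"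
    by (simp add: matrix_add_rdistrib matrix_scalar_ac inverse_cancellations
        flip: matrix_mul_assoc scalar_matrix_assoc)
  also have "?Winv ** matrix_inv L ** ?Winv = matrix_inv (diag w ** L ** diag w)"
    by (simp add: matrix_inv_mult invertible_mult L_inv weight_identities[OF w_pos]
        matrix_mul_assoc)
  finally show ?thesis .
qed

lemma sqrt_weighted_dc_gain:
  obtains G where "diag (\<lambda>l. sqrt (w l)) ** matrix_inv (L ** diag w) ** B
      = hcat (sw *\<^sub>R G) ((- sv) *\<^sub>R mat 1)"
    and "G ** transpose G = matrix_inv (diag (\<lambda>l. sqrt (w l)) ** L ** diag (\<lambda>l. sqrt (w l)))"
proof
  let ?G = "diag (\<lambda>l. 1 / sqrt (w l)) ** matrix_inv L ** F"
  have Wh_Winv: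
    "diag (\<lambda>l. sqrt (w l)) ** (diag (\<lambda>l. 1 / w l) ** X) = diag (\<lambda>l. 1 / sqrt (w l)) ** X"
    for X :: "real^'k::finite^'e"
    by (simp add: matrix_mul_assoc weight_identities[OF w_pos])
  show "diag (\<lambda>l. sqrt (w l)) ** matrix_inv (L ** diag w) ** B
      = hcat (sw *\<^sub>R ?G) ((- sv) *\<^sub>R mat 1)"
    by (simp add: B_def matrix_inv_mult_weights hcat_mult_left matrix_scalar_ac Wh_Winv
        inverse_cancellations del: scaleR_minus_left flip: matrix_mul_assoc scalar_matrix_assoc)
  have F_F: "F ** (transpose F ** X) = L ** X" for X :: "real^'k::finite^'e"
    by (simp add: matrix_mul_assoc F_gram)
  show "?G ** transpose ?G = matrix_inv (diag (\<lambda>l. sqrt (w l)) ** L ** diag (\<lambda>l. sqrt (w l)))"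
    by (simp add: matrix_transpose_mul transpose_matrix_inv[OF L_inv] L_symmetric matrix_inv_mult
        invertible_mult L_inv weight_identities[OF w_pos] inverse_cancellations F_F
        flip: matrix_mul_assoc)
qed

lemma hinf_norm_edge_resolvent:
  "hinf_norm (\<lambda>s. cmat C ** (matrix_inv (mat s + cmat (L ** diag w)) ** cmat B))
    = sigma_max (cmat (C ** matrix_inv (L ** diag w) ** B))"
  using invertible_imaginary_shift[OF L_symmetric L_inv w_pos] dc_gain_mult_input_transpose
  by (intro hinf_norm_resolvent)
    (simp_all add: invertible_mult L_inv weight_identities[OF w_pos] transpose_add transpose_scalar
      L_symmetric)

lemma hinf_norm_edge_transfer:
  "(hinf_norm (\<lambda>s. matrix_inv (mat s + cmat (L ** diag w)) ** cmat B))\<^sup>2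
    = sigma_max (cmat (sw\<^sup>2 *\<^sub>R matrix_inv (diag w ** L ** diag w) + sv\<^sup>2 *\<^sub>R diag (\<lambda>l. 1 / w l)))"
  using hinf_norm_edge_resolvent[of "mat 1"]
  by (simp add: cmat_mat sigma_max_cmat_squared dc_gain_gram)

lemma hinf_norm_sqrt_weighted_edge_transfer:
  "(hinf_norm (\<lambda>s. cmat (diag (\<lambda>l. sqrt (w l)))
      ** (matrix_inv (mat s + cmat (L ** diag w)) ** cmat B)))\<^sup>2
    = sw\<^sup>2 * sigma_max (cmat (matrix_inv (diag (\<lambda>l. sqrt (w l)) ** L ** diag (\<lambda>l. sqrt (w l)))))
      + sv\<^sup>2"
proof -
  obtain G where G: "diag (\<lambda>l. sqrt (w l)) ** matrix_inv (L ** diag w) ** B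
      = hcat (sw *\<^sub>R G) ((- sv) *\<^sub>R mat 1)"
    and G_gram:
      "G ** transpose G = matrix_inv (diag (\<lambda>l. sqrt (w l)) ** L ** diag (\<lambda>l. sqrt (w l)))"
    by (rule sqrt_weighted_dc_gain)
  have "(hinf_norm (\<lambda>s. cmat (diag (\<lambda>l. sqrt (w l)))
        ** (matrix_inv (mat s + cmat (L ** diag w)) ** cmat B)))\<^sup>2
      = (sigma_max (cmat (hcat (sw *\<^sub>R G) ((- sv) *\<^sub>R mat 1))))\<^sup>2"
    by (simp only: hinf_norm_edge_resolvent G)
  also have "\<dots> = sw\<^sup>2 * (sigma_max (cmat G))\<^sup>2 + (- sv)\<^sup>2"
    by (rule sigma_max_hcat_scaled_identity)
  finally show ?thesis
    by (simp add: sigma_max_cmat_squared G_gram)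
qed

end

end

theorem corollary2:
  fixes src tgt :: "'e::finite \<Rightarrow> 'n::finite"
    and w :: "'e \<Rightarrow> real" and eps :: "'n \<Rightarrow> real" and sw sv :: real
  assumes tree: "is_tree src tgt"
    and w_pos: "\<forall>l. w l > 0"
    and eps_pos: "\<forall>i. eps i > 0"
  defines "D \<equiv> incidence src tgt"
    and "W \<equiv> diag w"
    and "Wh \<equiv> diag (\<lambda>l. sqrt (w l))"
    and "Winv \<equiv> diag (\<lambda>l. 1 / w l)"
    and "Einv \<equiv> diag (\<lambda>i. 1 / eps i)"
    and "Einvh \<equiv> diag (\<lambda>i. 1 / sqrt (eps i))"
  defines "L \<equiv> transpose D ** Einv ** D"
  defines "Sig \<equiv> (\<lambda>s. matrix_inv (mat s + cmat (L ** W)) **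
              hcat (cmat (sw *\<^sub>R (transpose D ** Einvh))) (cmat ((- sv) *\<^sub>R (L ** Wh))))"
  defines "Pit \<equiv> (\<lambda>s. cmat Wh ** Sig s)"
  shows "(hinf_norm Sig)\<^sup>2 = sigma_max (cmat (sw\<^sup>2 *\<^sub>R matrix_inv (W ** L ** W) + sv\<^sup>2 *\<^sub>R Winv))
     \<and> (hinf_norm Pit)\<^sup>2 = sw\<^sup>2 * sigma_max (cmat (matrix_inv (Wh ** L ** Wh))) + sv\<^sup>2"
proof -
  have F_gram: "(transpose D ** Einvh) ** transpose (transpose D ** Einvh) = L"
    unfolding L_def Einv_def Einvh_def using eps_pos by (rule gram_sqrt_diag)
  have L_inv: "invertible L"
    unfolding L_def Einv_def D_def using incidence_injective[OF tree] eps_pos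
    by (intro invertible_gram_diag) auto
  define B where "B = hcat (sw *\<^sub>R (transpose D ** Einvh)) ((- sv) *\<^sub>R (L ** Wh))"
  have "Sig = (\<lambda>s. matrix_inv (mat s + cmat (L ** W)) ** cmat B)"
    and "Pit = (\<lambda>s. cmat Wh ** (matrix_inv (mat s + cmat (L ** W)) ** cmat B))"
    by (simp_all add: Sig_def Pit_def B_def cmat_hcat)
  then show ?thesis
    using hinf_norm_edge_transfer[OF L_inv w_pos F_gram B_def[unfolded Wh_def]]
      hinf_norm_sqrt_weighted_edge_transfer[OF L_inv w_pos F_gram B_def[unfolded Wh_def]]
    by (simp add: W_def Wh_def Winv_def)
qed

end
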